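(* Let $A=(0,0)$ and $B=(b_1,b_2)$ with $b_1>0$ and $0\le b_2\le b_1-1$. Let $s=b_2/b_1$, let $k\in(0,1)$, let $Q=(1-s)(1,0)+s(3/2,1/2)$ and $P=(1-k)(1,1)+kQ$, and let $\gamma(t)=Bt^3+3Pt^2(1-t)+3Pt(1-t)^2$ for $0\le t\le1$. Then $\gamma(t)$ lies in the region $\{(x,y): x>y>0\}$ for every $t\in(0,1)$.
   Context: $\gamma$ is the cubic B\'ezier curve with endpoints $A=\gamma(0)$ and $B=\gamma(1)$ and with both inner control points equal to $P$. *)

theory Defs
  imports "HOL-Analysis.Analysis"
begin

end

theory Submission
  imports Defs
begin

(* Because A = 0 and both inner control points equal P, the curve collapses to
   gamma t = t^3 B + 3t(1-t) P.  The end point B lies in the closed wedge x >= y >= 0,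
   while P lies in the open wedge x > y > 0: its x - y is k and its y is at least 1 - k.
   For 0 < t < 1 the coefficient 3t(1-t) is positive, and the open wedge absorbs
   nonnegative multiples of points of the closed wedge. *)

definition wedge :: "(real \<times> real) set" where
  "wedge = {p. snd p < fst p \<and> 0 < snd p}"

definition closed_wedge :: "(real \<times> real) set" where
  "closed_wedge = {p. snd p \<le> fst p \<and> 0 \<le> snd p}"

lemma cone_combination_mem_wedge:
  assumes "a \<in> closed_wedge" and "b \<in> wedge" and "0 \<le> \<alpha>" and "0 < \<beta>"
  shows "\<alpha> *\<^sub>R a + \<beta> *\<^sub>R b \<in> wedge"
proof -
  have "\<alpha> * snd a \<le> \<alpha> * fst a" "0 \<le> \<alpha> * snd a"
    using assms(1,3) by (auto simp: closed_wedge_def mult_left_mono)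
  moreover have "\<beta> * snd b < \<beta> * fst b" "0 < \<beta> * snd b"
    using assms(2,4) by (auto simp: wedge_def)
  ultimately show ?thesis
    by (simp add: wedge_def)
qed

lemma cubic_bezier_from_origin_equal_inner_controls:
  fixes B P :: "'a::real_vector"
  shows "t^3 *\<^sub>R B + (3 * t^2 * (1 - t)) *\<^sub>R P + (3 * t * (1 - t)^2) *\<^sub>R P
    = t^3 *\<^sub>R B + (3 * t * (1 - t)) *\<^sub>R P"
proof -
  have "3 * t^2 * (1 - t) + 3 * t * (1 - t)^2 = 3 * t * (1 - t)"
    by (simp add: power2_eq_square algebra_simps)
  then show ?thesis
    by (metis add.assoc scaleR_add_left)
qed

lemma control_point_mem_wedge:
  fixes s k :: real
  assumes "0 \<le> s" and "0 < k" and "k < 1"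
  shows "(1 - k) *\<^sub>R (1, 1) + k *\<^sub>R ((1 - s) *\<^sub>R (1, 0) + s *\<^sub>R (3/2, 1/2)) \<in> wedge"
  (is "?P \<in> wedge")
proof -
  have "fst ?P - snd ?P = k" and "snd ?P = 1 - k + k * s / 2"
    by (simp_all add: algebra_simps)
  moreover have "0 \<le> k * s / 2"
    using assms by simp
  ultimately show ?thesis
    unfolding wedge_def mem_Collect_eq using assms by linarith
qed

theorem lemma7:
  fixes b1 b2 k t :: real
  assumes "b1 > 0" and "0 \<le> b2" and "b2 \<le> b1 - 1"
    and "0 < k" and "k < 1"
    and "0 < t" and "t < 1"
  defines "s \<equiv> b2 / b1"
  defines "B \<equiv> (b1, b2) :: real \<times> real"
  defines "Q \<equiv> (1 - s) *\<^sub>R ((1, 0) :: real \<times> real) + s *\<^sub>R (3/2, 1/2)"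
  defines "P \<equiv> (1 - k) *\<^sub>R ((1, 1) :: real \<times> real) + k *\<^sub>R Q"
  defines "\<gamma> \<equiv> (\<lambda>t::real. t^3 *\<^sub>R B + (3 * t^2 * (1 - t)) *\<^sub>R P + (3 * t * (1 - t)^2) *\<^sub>R P)"
  shows "fst (\<gamma> t) > snd (\<gamma> t) \<and> snd (\<gamma> t) > 0"
proof -
  have "0 \<le> s"
    using assms(1,2) by (simp add: s_def)
  then have "P \<in> wedge"
    unfolding P_def Q_def using assms(4,5) by (rule control_point_mem_wedge)
  moreover have "B \<in> closed_wedge"
    using assms(2,3) by (simp add: B_def closed_wedge_def)
  moreover have "0 < 3 * t * (1 - t)"
    using assms(6,7) by simp
  ultimately have "t^3 *\<^sub>R B + (3 * t * (1 - t)) *\<^sub>R P \<in> wedge"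
    using assms(6) by (intro cone_combination_mem_wedge) auto
  then show ?thesis
    by (simp add: \<gamma>_def cubic_bezier_from_origin_equal_inner_controls wedge_def)
qed

end
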